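(* (i) For any $u,v\in\mathcal{L}PSH^*(\mathbb{C}^n)$, \[ c_\infty(u+v)\le c_\infty(\max\{u,v\})\le\min\{c_\infty(u),c_\infty(v)\}. \] (ii) If $u\in\mathcal{L}PSH(\mathbb{C}^n)$ and $v\in\mathcal{L}PSH^*(\mathbb{C}^n)$ satisfy $\limsup_{|z|\to\infty}\frac{u(z)}{v(z)}\le\sigma<\infty$, then $c_\infty(u)\ge\sigma^{-1}c_\infty(v)$.
   Context: $\mathcal{L}PSH(\mathbb{C}^n)$: plurisubharmonic $u$ on $\mathbb{C}^n$ with $\limsup_{|z|\to\infty}u(z)/\log|z|<\infty$; $\mathcal{L}PSH^*(\mathbb{C}^n)$: those with $u(z)\to+\infty$ as $|z|\to\infty$. $g\in L^2(\infty)$ means $\int_{\mathbb{C}^n\setminus K}|g|^2d\lambda<\infty$ for some compact $K$; $c_\infty(u)=\inf\{c>0:e^{-cu}\in L^2(\infty)\}$ (with $\inf\emptyset=+\infty$). *)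

theory Defs
  imports "HOL-Analysis.Analysis"
begin

text \<open>Points of C^n are vectors of type complex ^ 'n (n = CARD('n)); functions take
values in the extended reals (plurisubharmonic functions take values in [-oo, oo)).\<close>

text \<open>Mean value of an ereal function w over the circle theta in [0, 2 pi] -> a + e^{i theta} b,
i.e. the Lebesgue integral of a function bounded above by M (the Sup on the circle),
written out as M - (1/2pi) * integral of the nonnegative function M - w.\<close>
definition circle_mean :: "('a::real_normed_vector \<Rightarrow> ereal) \<Rightarrow> (real \<Rightarrow> 'a) \<Rightarrow> ereal" where
  "circle_mean w \<gamma> =
     (let M = (SUP t\<in>{0..2*pi}. w (\<gamma> t)) in
      M - ereal (1 / (2*pi)) *
        enn2ereal (\<integral>\<^sup>+ t. indicator {0..2*pi} t * e2ennreal (M - w (\<gamma> t)) \<partial>lborel))"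

definition psh :: "(complex ^ 'n \<Rightarrow> ereal) \<Rightarrow> bool" where
  "psh u \<longleftrightarrow>
     (\<forall>z. u z \<noteq> \<infinity>) \<and>
     (\<exists>z. u z \<noteq> -\<infinity>) \<and>
     (\<forall>t. open {z. u z < t}) \<and>
     (\<forall>a b. u a \<le> circle_mean u (\<lambda>\<theta>. a + cis \<theta> *s b))"

definition LPSH :: "(complex ^ 'n \<Rightarrow> ereal) set" where
  "LPSH = {u. psh u \<and> Limsup at_infinity (\<lambda>z. u z / ereal (ln (norm z))) < \<infinity>}"

definition LPSH_star :: "(complex ^ 'n \<Rightarrow> ereal) set" where
  "LPSH_star = {u. u \<in> LPSH \<and> (u \<longlongrightarrow> \<infinity>) at_infinity}"

definition exp_neg :: "real \<Rightarrow> ereal \<Rightarrow> ennreal" where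
  "exp_neg c x = (case x of ereal r \<Rightarrow> ennreal (exp (- c * r)) | PInfty \<Rightarrow> 0 | MInfty \<Rightarrow> \<infinity>)"

definition L2_infty :: "(complex ^ 'n \<Rightarrow> ennreal) \<Rightarrow> bool" where
  "L2_infty g \<longleftrightarrow> (\<exists>K. compact K \<and>
      (\<integral>\<^sup>+ z. indicator (- K) z * (g z)^2 \<partial>lborel) < \<infinity>)"

definition c_infty :: "(complex ^ 'n \<Rightarrow> ereal) \<Rightarrow> ereal" where
  "c_infty u = Inf {ereal c | c. c > 0 \<and> L2_infty (\<lambda>z. exp_neg c (u z))}"

end

theory Submission
  imports Defs
begin

text \<open>Since \<open>e^(-c (s v)) = e^(-(c s) v)\<close>, an inequality \<open>u \<le> s v\<close> near infinity turns every
admissible exponent \<open>c\<close> of \<open>u\<close> into the admissible exponent \<open>c s\<close> of \<open>v\<close>, whence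
\<open>c_infty u \<ge> c_infty v / s\<close>; for \<open>s = 1\<close> this says that \<open>c_infty\<close> is antitone for the
pointwise order near infinity. In (i) both functions are positive near infinity, so there
\<open>u, v \<le> max u v \<le> u + v\<close>. In (ii), \<open>u \<le> (\<sigma> + \<epsilon>) v\<close> near infinity for every \<open>\<epsilon> > 0\<close>,
and one lets \<open>\<epsilon>\<close> tend to \<open>0\<close>.\<close>

lemma max_le_add_ereal:
  fixes a b :: ereal
  shows "0 \<le> a \<Longrightarrow> 0 \<le> b \<Longrightarrow> max a b \<le> a + b"
  by (cases a; cases b) auto

lemma ereal_le_mult_of_divide_less:
  fixes x y :: ereal
  assumes "0 < y" "y \<noteq> \<infinity>" "x / y < ereal s"
  shows "x \<le> ereal s * y"
  using assms by (simp add: ereal_divide_less_iff mult.commute)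

lemma ereal_scaled_le_of_forall_greater:
  fixes x w :: ereal
  assumes "0 \<le> x" "0 < \<sigma>" and le: "\<And>s. \<sigma> < s \<Longrightarrow> ereal (1 / s) * x \<le> w"
  shows "ereal (1 / \<sigma>) * x \<le> w"
proof (cases x)
  case (real a)
  have "((\<lambda>s. ereal (1 / s) * x) \<longlongrightarrow> ereal (1 / \<sigma>) * x) (at_right \<sigma>)"
    unfolding real times_ereal.simps using \<open>0 < \<sigma>\<close>
    by (intro tendsto_ereal tendsto_intros) auto
  moreover have "eventually (\<lambda>s. ereal (1 / s) * x \<le> w) (at_right \<sigma>)"
    using eventually_at_right_less by (rule eventually_mono) (rule le)
  ultimately show ?thesis
    by (rule tendsto_upperbound) simp
next
  case PInf
  then show ?thesis using le[of "\<sigma> + 1"] \<open>0 < \<sigma>\<close> by simp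
qed (use \<open>0 \<le> x\<close> in simp)

lemma exp_neg_antimono:
  assumes "0 \<le> c" "x \<le> y"
  shows "exp_neg c y \<le> exp_neg c x"
  using assms
  by (cases x; cases y) (auto simp: exp_neg_def intro!: ennreal_leI mult_left_mono)

lemma exp_neg_ereal_mult:
  assumes "0 < s"
  shows "exp_neg c (ereal s * y) = exp_neg (c * s) y"
  using assms by (cases y) (simp_all add: exp_neg_def mult.assoc)

lemma L2_infty_eventually_mono:
  fixes g h :: "complex ^ 'n \<Rightarrow> ennreal"
  assumes le: "eventually (\<lambda>z. g z \<le> h z) at_infinity" and h: "L2_infty h"
  shows "L2_infty g"
proof -
  obtain R where R: "\<And>z. R \<le> norm z \<Longrightarrow> g z \<le> h z"
    using le unfolding eventually_at_infinity by blast
  obtain K where K: "compact K" "(\<integral>\<^sup>+ z. indicator (- K) z * (h z)^2 \<partial>lborel) < \<infinity>"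
    using h unfolding L2_infty_def by blast
  let ?K = "K \<union> cball 0 R"
  have "(\<integral>\<^sup>+ z. indicator (- ?K) z * (g z)^2 \<partial>lborel)
      \<le> (\<integral>\<^sup>+ z. indicator (- K) z * (h z)^2 \<partial>lborel)"
  proof (rule nn_integral_mono)
    fix z :: "complex ^ 'n"
    show "indicator (- ?K) z * (g z)^2 \<le> indicator (- K) z * (h z)^2"
    proof (cases "z \<in> ?K")
      case False
      then have "(g z)^2 \<le> (h z)^2" using R by (intro power_mono) auto
      then show ?thesis using False by (auto simp: indicator_def)
    qed (auto simp: indicator_def)
  qed
  moreover have "compact ?K" using K(1) by auto
  ultimately show ?thesis using K(2) unfolding L2_infty_def
    by (meson order.strict_trans1)
qed

lemma c_infty_nonneg: "0 \<le> c_infty u"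
  unfolding c_infty_def by (rule Inf_greatest) auto

lemma c_infty_eventually_le_mult:
  fixes u v :: "complex ^ 'n \<Rightarrow> ereal"
  assumes le: "eventually (\<lambda>z. u z \<le> ereal s * v z) at_infinity" and "0 < s"
  shows "ereal (1 / s) * c_infty v \<le> c_infty u"
  unfolding c_infty_def[of u]
proof (rule Inf_greatest, safe)
  fix c :: real
  assume c: "0 < c" "L2_infty (\<lambda>z. exp_neg c (u z))"
  have "eventually (\<lambda>z. exp_neg (c * s) (v z) \<le> exp_neg c (u z)) at_infinity"
    using le by eventually_elim
      (use c(1) \<open>0 < s\<close> in \<open>auto simp flip: exp_neg_ereal_mult intro: exp_neg_antimono\<close>)
  then have "L2_infty (\<lambda>z. exp_neg (c * s) (v z))"
    using c(2) by (rule L2_infty_eventually_mono)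
  then have "c_infty v \<le> ereal (c * s)"
    unfolding c_infty_def using c(1) \<open>0 < s\<close> by (intro Inf_lower) auto
  then have "ereal (1 / s) * c_infty v \<le> ereal (1 / s) * ereal (c * s)"
    using \<open>0 < s\<close> by (intro ereal_mult_left_mono) auto
  then show "ereal (1 / s) * c_infty v \<le> ereal c"
    using \<open>0 < s\<close> by simp
qed

corollary c_infty_eventually_antimono:
  fixes u v :: "complex ^ 'n \<Rightarrow> ereal"
  assumes "eventually (\<lambda>z. v z \<le> u z) at_infinity"
  shows "c_infty u \<le> c_infty v"
  using c_infty_eventually_le_mult[of v 1 u] assms by simp

lemma LPSH_star_eventually_pos:
  "v \<in> LPSH_star \<Longrightarrow> eventually (\<lambda>z. 0 < v z) at_infinity"
  unfolding LPSH_star_def tendsto_PInfty by (metis (mono_tags) mem_Collect_eq zero_ereal_def)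

lemma c_infty_ge_of_Limsup_divide_le:
  fixes u v :: "complex ^ 'n \<Rightarrow> ereal"
  assumes v: "v \<in> LPSH_star" and "0 < \<sigma>"
    and lim: "Limsup at_infinity (\<lambda>z. u z / v z) \<le> ereal \<sigma>"
  shows "ereal (1 / \<sigma>) * c_infty v \<le> c_infty u"
proof (rule ereal_scaled_le_of_forall_greater[OF c_infty_nonneg \<open>0 < \<sigma>\<close>])
  fix s assume "\<sigma> < s"
  have finite: "v z \<noteq> \<infinity>" for z
    using v by (simp add: LPSH_star_def LPSH_def psh_def)
  have "eventually (\<lambda>z. u z / v z < ereal s) at_infinity"
    using \<open>\<sigma> < s\<close> by (intro Limsup_lessD le_less_trans[OF lim]) simp
  then have "eventually (\<lambda>z. u z \<le> ereal s * v z) at_infinity"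
    using LPSH_star_eventually_pos[OF v]
    by eventually_elim (use finite in \<open>auto intro: ereal_le_mult_of_divide_less\<close>)
  then show "ereal (1 / s) * c_infty v \<le> c_infty u"
    using \<open>0 < \<sigma>\<close> \<open>\<sigma> < s\<close> by (intro c_infty_eventually_le_mult) auto
qed

theorem proposition5p1:
  shows "(\<forall>(u::complex^'n \<Rightarrow> ereal) v. u \<in> LPSH_star \<and> v \<in> LPSH_star \<longrightarrow>
           c_infty (\<lambda>z. u z + v z) \<le> c_infty (\<lambda>z. max (u z) (v z)) \<and>
           c_infty (\<lambda>z. max (u z) (v z)) \<le> min (c_infty u) (c_infty v))
       \<and> (\<forall>(u::complex^'n \<Rightarrow> ereal) v (\<sigma>::real).
           u \<in> LPSH \<and> v \<in> LPSH_star \<and> 0 < \<sigma> \<and>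
           Limsup at_infinity (\<lambda>z. u z / v z) \<le> ereal \<sigma> \<longrightarrow>
           c_infty u \<ge> ereal (1 / \<sigma>) * c_infty v)"
proof (intro conjI allI impI; elim conjE)
  fix u v :: "complex ^ 'n \<Rightarrow> ereal"
  assume "u \<in> LPSH_star" "v \<in> LPSH_star"
  then have "eventually (\<lambda>z. max (u z) (v z) \<le> u z + v z) at_infinity"
    by (rule eventually_elim2[OF LPSH_star_eventually_pos LPSH_star_eventually_pos])
      (intro max_le_add_ereal less_imp_le)
  then show "c_infty (\<lambda>z. u z + v z) \<le> c_infty (\<lambda>z. max (u z) (v z))"
    by (rule c_infty_eventually_antimono)
  show "c_infty (\<lambda>z. max (u z) (v z)) \<le> min (c_infty u) (c_infty v)"
    by (simp add: c_infty_eventually_antimono)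
next
  fix u v :: "complex ^ 'n \<Rightarrow> ereal" and \<sigma> :: real
  assume "v \<in> LPSH_star" "0 < \<sigma>" "Limsup at_infinity (\<lambda>z. u z / v z) \<le> ereal \<sigma>"
  then show "ereal (1 / \<sigma>) * c_infty v \<le> c_infty u"
    by (rule c_infty_ge_of_Limsup_divide_le)
qed

end
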